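(* For every finite simple undirected graph $G$ and every nonnegative integer $k$, $\chi(\mathsf{TS}_k(G)) \leq \chi(J(\chi(G), k))$.
   Context: $\chi(H)$ is the chromatic number of $H$ (zero for the graph with no vertices). A $k$-clique is a set of $k$ pairwise adjacent vertices. $\mathsf{TS}_k(G)$ is the graph whose vertices are the $k$-cliques of $G$, two $k$-cliques $C, C'$ being adjacent iff there are vertices $u,v$ with $C \setminus C' = \{u\}$, $C' \setminus C = \{v\}$ and $uv \in E(G)$. The Johnson graph $J(n,k)$ has as vertices the $k$-element subsets of an $n$-element set, two being adjacent iff their intersection has exactly $k-1$ elements. *)

theory Defs
  imports Main
begin

definition simple_graph :: "'a set \<Rightarrow> 'a set set \<Rightarrow> bool" where
  "simple_graph V E \<longleftrightarrow> finite V \<and>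
     (\<forall>e\<in>E. \<exists>u v. e = {u, v} \<and> u \<noteq> v \<and> u \<in> V \<and> v \<in> V)"

definition proper_colouring :: "'a set \<Rightarrow> 'a set set \<Rightarrow> ('a \<Rightarrow> nat) \<Rightarrow> nat \<Rightarrow> bool" where
  "proper_colouring V E f n \<longleftrightarrow> f ` V \<subseteq> {..<n} \<and>
     (\<forall>u\<in>V. \<forall>v\<in>V. {u, v} \<in> E \<longrightarrow> f u \<noteq> f v)"

definition chromatic_number :: "'a set \<Rightarrow> 'a set set \<Rightarrow> nat" where
  "chromatic_number V E = (LEAST n. \<exists>f. proper_colouring V E f n)"

definition is_clique :: "'a set \<Rightarrow> 'a set set \<Rightarrow> nat \<Rightarrow> 'a set \<Rightarrow> bool" where
  "is_clique V E k C \<longleftrightarrow> C \<subseteq> V \<and> card C = k \<and>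
     (\<forall>u\<in>C. \<forall>v\<in>C. u \<noteq> v \<longrightarrow> {u, v} \<in> E)"

definition TS_vertices :: "'a set \<Rightarrow> 'a set set \<Rightarrow> nat \<Rightarrow> 'a set set" where
  "TS_vertices V E k = {C. is_clique V E k C}"

definition TS_edges :: "'a set \<Rightarrow> 'a set set \<Rightarrow> nat \<Rightarrow> 'a set set set" where
  "TS_edges V E k = {{C, C'} | C C'. C \<in> TS_vertices V E k \<and> C' \<in> TS_vertices V E k \<and>
     (\<exists>u v. C - C' = {u} \<and> C' - C = {v} \<and> {u, v} \<in> E)}"

definition johnson_vertices :: "nat \<Rightarrow> nat \<Rightarrow> nat set set" where
  "johnson_vertices n k = {A. A \<subseteq> {..<n} \<and> card A = k}"

definition johnson_edges :: "nat \<Rightarrow> nat \<Rightarrow> nat set set set" where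
  "johnson_edges n k = {{A, B} | A B. A \<in> johnson_vertices n k \<and> B \<in> johnson_vertices n k \<and>
     card (A \<inter> B) + 1 = k}"

end

theory Submission
  imports Defs
begin

text \<open>Fix a colouring f of G with \<chi>(G) colours. Since f is injective on cliques, it sends every
  k-clique C to a k-subset f ` C of the colour set, i.e. to a vertex of J(\<chi>(G), k). If C and D
  are adjacent in TS_k(G), then C \<union> D is again a clique, so f is injective on C \<union> D and
  f ` C \<inter> f ` D = f ` (C \<inter> D) has k - 1 elements. Hence C \<mapsto> f ` C is a graph homomorphism
  TS_k(G) \<rightarrow> J(\<chi>(G), k), and pulling back an optimal colouring of the Johnson graph along it
  gives the bound.\<close>

definition graph_hom :: "'a set \<Rightarrow> 'a set set \<Rightarrow> 'b set \<Rightarrow> 'b set set \<Rightarrow> ('a \<Rightarrow> 'b) \<Rightarrow> bool" where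
  "graph_hom V E V' E' h \<longleftrightarrow> h ` V \<subseteq> V' \<and>
     (\<forall>u\<in>V. \<forall>v\<in>V. {u, v} \<in> E \<longrightarrow> {h u, h v} \<in> E')"

lemma proper_colouring_comp_graph_hom:
  assumes "graph_hom V E V' E' h" and "proper_colouring V' E' g n"
  shows "proper_colouring V E (g \<circ> h) n"
  using assms unfolding graph_hom_def proper_colouring_def by (auto simp: image_subset_iff)

lemma chromatic_number_le:
  assumes "proper_colouring V E f n"
  shows "chromatic_number V E \<le> n"
  unfolding chromatic_number_def using assms by (blast intro: Least_le)

lemma proper_colouring_chromatic_number:
  assumes "proper_colouring V E f n"
  obtains g where "proper_colouring V E g (chromatic_number V E)"
  using that LeastI_ex[of "\<lambda>n. \<exists>f. proper_colouring V E f n"] assms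
  unfolding chromatic_number_def by blast

lemma proper_colouring_exists:
  assumes "finite V" and "\<And>v. {v} \<notin> E"
  obtains f n where "proper_colouring V E f n"
proof -
  obtain f :: "'a \<Rightarrow> nat" and n where "f ` V = {i. i < n}" and "inj_on f V"
    using finite_imp_inj_to_nat_seg[OF assms(1)] by blast
  then have "proper_colouring V E f n"
    using assms(2) unfolding proper_colouring_def by (auto dest: inj_onD)
  then show thesis by (rule that)
qed

lemma chromatic_number_le_graph_hom:
  assumes "graph_hom V E V' E' h" and "finite V'" and "\<And>v. {v} \<notin> E'"
  shows "chromatic_number V E \<le> chromatic_number V' E'"
proof -
  obtain f n where "proper_colouring V' E' f n"
    using proper_colouring_exists assms(2,3) .
  then obtain g where "proper_colouring V' E' g (chromatic_number V' E')"
    by (rule proper_colouring_chromatic_number)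
  then show ?thesis
    by (intro chromatic_number_le[of _ _ "g \<circ> h"] proper_colouring_comp_graph_hom[OF assms(1)])
qed

lemma simple_graph_no_loop:
  assumes "simple_graph V E"
  shows "{v} \<notin> E"
  using assms unfolding simple_graph_def by (metis doubleton_eq_iff insert_absorb2)

lemma mem_johnson_edges:
  "{A, B} \<in> johnson_edges n k \<longleftrightarrow>
     A \<in> johnson_vertices n k \<and> B \<in> johnson_vertices n k \<and> card (A \<inter> B) + 1 = k"
  unfolding johnson_edges_def by (auto simp: doubleton_eq_iff Int_commute)

lemma finite_johnson_vertices: "finite (johnson_vertices n k)"
  by (rule finite_subset[of _ "Pow {..<n}"]) (auto simp: johnson_vertices_def)

lemma johnson_no_loop: "{A} \<notin> johnson_edges n k"
  using mem_johnson_edges[of A A n k] by (auto simp: johnson_vertices_def)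

lemma mem_TS_edges:
  "{C, D} \<in> TS_edges V E k \<longleftrightarrow> C \<in> TS_vertices V E k \<and> D \<in> TS_vertices V E k \<and>
     (\<exists>u v. C - D = {u} \<and> D - C = {v} \<and> {u, v} \<in> E)"
  unfolding TS_edges_def by (auto simp: doubleton_eq_iff insert_commute)

lemma inj_on_clique:
  assumes "proper_colouring V E f n" and "is_clique V E k C"
  shows "inj_on f C"
proof (rule inj_onI, rule ccontr)
  fix x y assume "x \<in> C" "y \<in> C" "f x = f y" "x \<noteq> y"
  then show False using assms unfolding proper_colouring_def is_clique_def by blast
qed

lemma is_clique_swap_Un:
  assumes C: "is_clique V E k C" and D: "is_clique V E k D"
    and swap: "C - D = {u}" "D - C = {v}" "{u, v} \<in> E"
  shows "is_clique V E (card (C \<union> D)) (C \<union> D)"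
  unfolding is_clique_def
proof (intro conjI ballI impI)
  show "C \<union> D \<subseteq> V" using C D by (simp add: is_clique_def)
next
  fix x y assume xy: "x \<in> C \<union> D" "y \<in> C \<union> D" "x \<noteq> y"
  have "C \<union> D = (C \<inter> D) \<union> {u, v}" using swap(1,2) by blast
  then consider "x \<in> C" "y \<in> C" | "x \<in> D" "y \<in> D" | "{x, y} = {u, v}"
    using xy swap(1,2) by (auto simp: insert_commute)
  then show "{x, y} \<in> E"
  proof cases
    case 1
    then show ?thesis using C \<open>x \<noteq> y\<close> by (simp add: is_clique_def)
  next
    case 2
    then show ?thesis using D \<open>x \<noteq> y\<close> by (simp add: is_clique_def)
  next
    case 3
    then show ?thesis using swap(3) by simp
  qed
qed simp

lemma card_Int_swap:
  assumes "finite C" and "C - D = {u}"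
  shows "card (C \<inter> D) + 1 = card C"
proof -
  have "C = insert u (C \<inter> D)" and "u \<notin> C \<inter> D" using assms(2) by auto
  then show ?thesis using assms(1) by (metis Suc_eq_plus1 card_insert_disjoint finite_Int)
qed

lemma colour_image_mem_johnson_vertices:
  assumes "proper_colouring V E f n" and "is_clique V E k C"
  shows "f ` C \<in> johnson_vertices n k"
  using assms card_image[OF inj_on_clique[OF assms]]
  unfolding johnson_vertices_def proper_colouring_def is_clique_def by blast

lemma graph_hom_TS_johnson:
  assumes "finite V" and f: "proper_colouring V E f n"
  shows "graph_hom (TS_vertices V E k) (TS_edges V E k) (johnson_vertices n k) (johnson_edges n k)
           (\<lambda>C. f ` C)"
  unfolding graph_hom_def
proof (intro conjI ballI impI)
  show "(\<lambda>C. f ` C) ` TS_vertices V E k \<subseteq> johnson_vertices n k"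
    using colour_image_mem_johnson_vertices[OF f] by (auto simp: TS_vertices_def)
next
  fix C D assume "C \<in> TS_vertices V E k" "D \<in> TS_vertices V E k" "{C, D} \<in> TS_edges V E k"
  then obtain u v where C: "is_clique V E k C" and D: "is_clique V E k D"
    and swap: "C - D = {u}" "D - C = {v}" "{u, v} \<in> E"
    by (auto simp: mem_TS_edges TS_vertices_def)
  have "inj_on f (C \<union> D)"
    using inj_on_clique[OF f is_clique_swap_Un[OF C D swap]] .
  then have "f ` C \<inter> f ` D = f ` (C \<inter> D)" by (simp add: inj_on_image_Int)
  moreover have "card (f ` (C \<inter> D)) = card (C \<inter> D)"
    using \<open>inj_on f (C \<union> D)\<close> by (blast intro: card_image inj_on_subset)
  moreover have "card (C \<inter> D) + 1 = k"
    using C card_Int_swap[OF _ swap(1)] finite_subset[OF _ assms(1)] by (simp add: is_clique_def)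
  ultimately show "{f ` C, f ` D} \<in> johnson_edges n k"
    using colour_image_mem_johnson_vertices[OF f] C D by (simp add: mem_johnson_edges)
qed

theorem proposition3p3:
  fixes V :: "'a set" and E :: "'a set set" and k :: nat
  assumes "simple_graph V E"
  shows "chromatic_number (TS_vertices V E k) (TS_edges V E k)
           \<le> chromatic_number (johnson_vertices (chromatic_number V E) k)
                                (johnson_edges (chromatic_number V E) k)"
proof -
  have "finite V" using assms by (simp add: simple_graph_def)
  obtain f0 n where "proper_colouring V E f0 n"
    using proper_colouring_exists \<open>finite V\<close> simple_graph_no_loop[OF assms] .
  then obtain f where "proper_colouring V E f (chromatic_number V E)"
    by (rule proper_colouring_chromatic_number)
  then show ?thesis
    by (intro chromatic_number_le_graph_hom[OF graph_hom_TS_johnson[OF \<open>finite V\<close>]]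
        finite_johnson_vertices johnson_no_loop)
qed

end
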